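(* Let $(0,0,y_e,0)$ be an equilibrium of the Steiner drop system, with $y_e=\tfrac13\sqrt{\tan\alpha_e}$, $\alpha_e\in(0,\pi/2)$, $q(\alpha_e)=q(\alpha_0)$. Then $f_x(0,y_e)<0$, so two eigenvalues of the Jacobian there are $\pm i\sqrt{-f_x(0,y_e)}$, nonzero and purely imaginary. Furthermore $h_y(0,y_e)<0$ if $\alpha_e<\alpha_0^*$, $h_y(0,y_e)=0$ if $\alpha_e=\alpha_0^*$, and $h_y(0,y_e)>0$ if $\alpha_e>\alpha_0^*$. Consequently, at the equilibrium $(0,0,\tfrac13\sqrt{\tan\alpha_0},0)$ all four eigenvalues are nonzero and purely imaginary when $\alpha_0<\alpha_0^*$, while when $\alpha_0>\alpha_0^*$ two eigenvalues are purely imaginary and two are real, nonzero, of opposite signs; for $\alpha_0\neq\alpha_0^*$ the two equilibria always have opposite types (the one with smaller angle $\alpha_e$ has all eigenvalues purely imaginary).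
   Context: Let $q(\alpha)=\dfrac{2\sin^2\alpha\,\sqrt{\tan\alpha}}{4+\sec\alpha}$ for $\alpha\in(0,\pi/2)$, and let $\alpha_0^*\approx1.391$ denote the unique point in $(0,\pi/2)$ at which $q$ attains its maximum ($q$ is strictly increasing before and strictly decreasing after $\alpha_0^*$). Fix $\alpha_0\in(0,\pi/2)$. For $x\in\mathbb{R}$, $y>0$ define $a(x,y)=\sqrt{\left(\tfrac{1}{3y}-3x\right)^2+9y^2}$, $b(x,y)=\sqrt{\left(\tfrac{1}{3y}+3x\right)^2+9y^2}$, $f(x,y)=\frac{1}{a}\left(\frac{1}{3y}-3x\right)-\frac{1}{b}\left(\frac{1}{3y}+3x\right)$, $h(x,y)=-3y\left(\frac1a+\frac1b\right)+\frac{q(\alpha_0)}{3y}\left(\frac{2(a+b)}{3y}+ab\right)$. The Steiner drop system is the ODE on $\{(x,w,y,z)\in\mathbb{R}^4: y>0\}$: $\dot x=w,\ \dot w=f(x,y),\ \dot y=z,\ \dot z=h(x,y)$. Its equilibria are the points $(0,0,y,0)$ with $y=\tfrac13\sqrt{\tan\alpha}$, $q(\alpha)=q(\alpha_0)$; at such a point the Jacobian eigenvalues are $\pm\sqrt{f_x(0,y)},\pm\sqrt{h_y(0,y)}$. Subscripts denote partial derivatives. *)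

theory Defs
  imports Complex_Main "HOL-Analysis.Derivative" "Jordan_Normal_Form.Char_Poly"
begin

definition q :: "real \<Rightarrow> real" where
  "q \<alpha> = 2 * (sin \<alpha>)\<^sup>2 * sqrt (tan \<alpha>) / (4 + 1 / cos \<alpha>)"

definition alpha_star :: real where
  "alpha_star = (THE a. 0 < a \<and> a < pi/2 \<and> (\<forall>b. 0 < b \<and> b < pi/2 \<longrightarrow> q b \<le> q a))"

definition sa :: "real \<Rightarrow> real \<Rightarrow> real" where
  "sa x y = sqrt ((1/(3*y) - 3*x)\<^sup>2 + 9*y\<^sup>2)"

definition sb :: "real \<Rightarrow> real \<Rightarrow> real" where
  "sb x y = sqrt ((1/(3*y) + 3*x)\<^sup>2 + 9*y\<^sup>2)"

definition sf :: "real \<Rightarrow> real \<Rightarrow> real" where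
  "sf x y = (1 / sa x y) * (1/(3*y) - 3*x) - (1 / sb x y) * (1/(3*y) + 3*x)"

definition sh :: "real \<Rightarrow> real \<Rightarrow> real \<Rightarrow> real" where
  "sh \<alpha>0 x y = -3*y * (1 / sa x y + 1 / sb x y)
     + q \<alpha>0 / (3*y) * (2 * (sa x y + sb x y) / (3*y) + sa x y * sb x y)"

definition f_x :: "real \<Rightarrow> real \<Rightarrow> real" where "f_x x y = deriv (\<lambda>t. sf t y) x"
definition f_y :: "real \<Rightarrow> real \<Rightarrow> real" where "f_y x y = deriv (\<lambda>t. sf x t) y"
definition h_x :: "real \<Rightarrow> real \<Rightarrow> real \<Rightarrow> real" where "h_x \<alpha>0 x y = deriv (\<lambda>t. sh \<alpha>0 t y) x"
definition h_y :: "real \<Rightarrow> real \<Rightarrow> real \<Rightarrow> real" where "h_y \<alpha>0 x y = deriv (\<lambda>t. sh \<alpha>0 x t) y"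

text \<open>Jacobian (complexified) of the Steiner drop system
  (x' = w, w' = f(x,y), y' = z, z' = h(x,y)) at the point (x,w,y,z),
  variables ordered (x, w, y, z).\<close>
definition steiner_jac :: "real \<Rightarrow> real \<Rightarrow> real \<Rightarrow> complex mat" where
  "steiner_jac \<alpha>0 x y = mat 4 4 (\<lambda>(i,j).
     complex_of_real
      (if i = 0 then (if j = 1 then 1 else 0)
       else if i = 1 then (if j = 0 then f_x x y else if j = 2 then f_y x y else 0)
       else if i = 2 then (if j = 3 then 1 else 0)
       else (if j = 0 then h_x \<alpha>0 x y else if j = 2 then h_y \<alpha>0 x y else 0)))"

end

theory Submission
  imports Defs
begin

text \<open>On the axis \<open>x = 0\<close> the two distances \<open>a\<close> and \<open>b\<close> coincide, so \<open>f(0, y) = 0\<close> and \<open>h\<close> is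
  even in \<open>x\<close>; hence \<open>f_y = h_x = 0\<close> there, the Jacobian splits into the blocks
  \<open>[[0, 1], [f_x, 0]]\<close> and \<open>[[0, 1], [h_y, 0]]\<close>, and its eigenvalues are the square roots of
  \<open>f_x\<close> and \<open>h_y\<close>. At an equilibrium
  \<open>y = sqrt (tan \<alpha>) / 3\<close> one has \<open>3 y a(0, y) = sec \<alpha>\<close>, and eliminating \<open>q(\<alpha>\<^sub>0) = q(\<alpha>)\<close> turns
  \<open>h_y(0, y)\<close> into \<open>-18 y cos \<alpha> P(cos \<alpha>) / (4 cos \<alpha> + 1)\<close> with \<open>P(c) = 16c\<^sup>3 + 6c\<^sup>2 + 4c - 1\<close>.
  The same cubic governs \<open>q\<close>: \<open>q'(\<alpha>) = sin \<alpha> sqrt (tan \<alpha>) P(cos \<alpha>) / (4 cos \<alpha> + 1)\<^sup>2\<close>.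
  As \<open>P\<close> is increasing on \<open>[0, \<infinity>)\<close> with a single root, \<open>P(cos \<alpha>)\<close> changes sign exactly at
  \<open>\<alpha>\<^sub>0\<^sup>*\<close>, which is therefore the maximiser of \<open>q\<close>, and two distinct solutions of
  \<open>q(\<alpha>) = q(\<alpha>\<^sub>0)\<close> lie on opposite sides of it.\<close>

no_notation vec_nth (infixl "$" 90)

definition crit_cubic :: "real \<Rightarrow> real" where
  "crit_cubic c = 16 * c^3 + 6 * c^2 + 4 * c - 1"

lemma crit_cubic_strict_mono:
  assumes "0 \<le> c1" "c1 < c2"
  shows "crit_cubic c1 < crit_cubic c2"
proof -
  have "c1^3 < c2^3" "c1^2 < c2^2" using assms by (simp_all add: power_strict_mono)
  then show ?thesis using assms by (simp add: crit_cubic_def)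
qed

lemma crit_cubic_unique_root: "\<exists>!c. 0 \<le> c \<and> crit_cubic c = 0"
proof (rule ex_ex1I)
  have "\<exists>c. 0 \<le> c \<and> c \<le> 1 \<and> crit_cubic c = 0"
    by (rule IVT) (auto simp: crit_cubic_def intro!: continuous_intros)
  then show "\<exists>c. 0 \<le> c \<and> crit_cubic c = 0" by blast
next
  show "c1 = c2" if "0 \<le> c1 \<and> crit_cubic c1 = 0" "0 \<le> c2 \<and> crit_cubic c2 = 0" for c1 c2
    using that crit_cubic_strict_mono[of c1 c2] crit_cubic_strict_mono[of c2 c1]
    by (cases c1 c2 rule: linorder_cases) auto
qed

definition crit_root :: real where
  "crit_root = (THE c. 0 \<le> c \<and> crit_cubic c = 0)"

lemma crit_root: "0 < crit_root" "crit_root < 1" "crit_cubic crit_root = 0"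
proof -
  have root: "0 \<le> crit_root" "crit_cubic crit_root = 0"
    using theI'[OF crit_cubic_unique_root] by (simp_all add: crit_root_def)
  show "crit_cubic crit_root = 0" by (fact root(2))
  show "0 < crit_root" using root by (cases "crit_root = 0") (auto simp: crit_cubic_def)
  show "crit_root < 1"
  proof (rule ccontr)
    assume "\<not> crit_root < 1"
    then have "crit_cubic 1 \<le> crit_cubic crit_root"
      using crit_cubic_strict_mono[of 1 crit_root] by (cases "crit_root = 1") auto
    then show False using root by (simp add: crit_cubic_def)
  qed
qed

lemma sgn_crit_cubic_cos:
  assumes "0 < a" "a < pi/2"
  shows "sgn (crit_cubic (cos a)) = sgn (arccos crit_root - a)"
proof -
  define b where "b = arccos crit_root"
  have b: "0 < b" "b < pi" "cos b = crit_root"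
    using crit_root arccos_lt_bounded[of crit_root] by (auto simp: b_def)
  have "0 < cos a" using assms by (simp add: cos_gt_zero)
  consider "a < b" | "a = b" | "b < a" by linarith
  then show ?thesis
  proof cases
    case 1
    then have "cos b < cos a" using assms b by (intro cos_monotone_0_pi) auto
    then have "crit_root < cos a" using b by simp
    then show ?thesis using 1 crit_root crit_cubic_strict_mono[of crit_root "cos a"] by (simp add: b_def)
  next
    case 2
    then show ?thesis using b crit_root by (simp add: b_def)
  next
    case 3
    then have "cos a < cos b" using assms b by (intro cos_monotone_0_pi) auto
    then have "cos a < crit_root" using b by simp
    then show ?thesis
      using 3 \<open>0 < cos a\<close> crit_root crit_cubic_strict_mono[of "cos a" crit_root] by (simp add: b_def)
  qed
qed

lemma has_real_derivative_q:
  assumes "0 < a" "a < pi/2"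
  shows "(q has_real_derivative sin a * sqrt (tan a) * crit_cubic (cos a) / (4 * cos a + 1)^2) (at a)"
proof -
  define s c r where "s = sin a" and "c = cos a" and "r = sqrt (tan a)"
  have pos: "c > 0" "s > 0" "r > 0"
    using assms by (auto simp: s_def c_def r_def intro: cos_gt_zero sin_gt_zero tan_gt_zero)
  have r2: "r^2 = s / c" using pos by (simp add: r_def s_def c_def tan_def)
  have s2: "s^2 = 1 - c^2" by (simp add: s_def c_def sin_squared_eq)
  have d1: "((\<lambda>a. 2 * (sin a)^2) has_real_derivative 4 * s * c) (at a)"
    unfolding s_def c_def by (auto intro!: derivative_eq_intros)
  have d2: "((\<lambda>a. sqrt (tan a)) has_real_derivative 1 / (2 * r * c^2)) (at a)"
    using pos unfolding r_def c_def by (auto intro!: derivative_eq_intros simp: field_simps power2_eq_square)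
  have d3: "((\<lambda>a. 4 + 1 / cos a) has_real_derivative s / c^2) (at a)"
    using pos unfolding s_def c_def by (auto intro!: derivative_eq_intros simp: power2_eq_square)
  have "0 < 4 + 1 / c" using pos by (intro add_pos_pos) simp_all
  then have "(q has_real_derivative
      ((4 * s * c * r + 2 * s^2 * (1 / (2 * r * c^2))) * (4 + 1/c) - 2 * s^2 * r * (s/c^2))
        / ((4 + 1/c) * (4 + 1/c))) (at a)"
    unfolding q_def[abs_def] using DERIV_divide[OF DERIV_mult[OF d1 d2] d3]
    by (simp add: s_def c_def r_def)
  moreover have "2 * s^2 * (1 / (2 * r * c^2)) = s * r / c"
    using pos r2 by (simp add: field_simps power2_eq_square)
  moreover have "(4 * s * c * r + s * r / c) * (4 + 1/c) - 2 * (1 - c^2) * r * (s/c^2)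
      = s * r * crit_cubic c / c^2"
    using pos by (simp add: crit_cubic_def field_simps power2_eq_square power3_eq_cube)
  moreover have "(4 + 1/c) * (4 + 1/c) = (4 * c + 1)^2 / c^2"
    using pos by (simp add: field_simps power2_eq_square)
  ultimately show ?thesis unfolding s2 using pos by (simp add: s_def c_def r_def mult.assoc)
qed

lemma sgn_deriv_q:
  assumes "0 < a" "a < pi/2"
  obtains D where "(q has_real_derivative D) (at a)" "sgn D = sgn (arccos crit_root - a)"
proof
  let ?K = "sin a * sqrt (tan a) / (4 * cos a + 1)^2"
  have "?K > 0" using assms sin_gt_zero[of a] tan_gt_zero[of a] cos_gt_zero[of a] by simp
  then have "sgn (?K * crit_cubic (cos a)) = sgn (crit_cubic (cos a))"
    by (simp only: sgn_mult sgn_pos mult_1)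
  then show "sgn (sin a * sqrt (tan a) * crit_cubic (cos a) / (4 * cos a + 1)^2) = sgn (arccos crit_root - a)"
    using sgn_crit_cubic_cos[OF assms] by simp
qed (rule has_real_derivative_q[OF assms])

lemma arccos_crit_root_bounds: "0 < arccos crit_root" "arccos crit_root < pi/2"
  using arccos_less_arccos[of crit_root 1] arccos_less_arccos[of 0 crit_root] crit_root by auto

lemma isCont_q: "0 < a \<Longrightarrow> a < pi/2 \<Longrightarrow> isCont q a"
  using DERIV_isCont[OF has_real_derivative_q] .

lemma q_less_before_crit:
  assumes "0 < x" "x < y" "y \<le> arccos crit_root"
  shows "q x < q y"
proof (rule DERIV_pos_imp_increasing_open[OF \<open>x < y\<close>])
  fix z assume "x < z" "z < y"
  with assms arccos_crit_root_bounds obtain D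
    where "(q has_real_derivative D) (at z)" "sgn D = sgn (arccos crit_root - z)"
    using sgn_deriv_q[of z] by auto
  with \<open>z < y\<close> assms(3) show "\<exists>D. (q has_real_derivative D) (at z) \<and> 0 < D"
    by (auto simp: sgn_if split: if_splits)
next
  show "continuous_on {x..y} q"
    using assms arccos_crit_root_bounds by (intro continuous_at_imp_continuous_on ballI isCont_q) auto
qed

lemma q_greater_after_crit:
  assumes "arccos crit_root \<le> x" "x < y" "y < pi/2"
  shows "q y < q x"
proof (rule DERIV_neg_imp_decreasing_open[OF \<open>x < y\<close>])
  fix z assume "x < z" "z < y"
  with assms arccos_crit_root_bounds obtain D
    where "(q has_real_derivative D) (at z)" "sgn D = sgn (arccos crit_root - z)"
    using sgn_deriv_q[of z] by auto
  with \<open>x < z\<close> assms(1) show "\<exists>D. (q has_real_derivative D) (at z) \<and> D < 0"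
    by (auto simp: sgn_if split: if_splits)
next
  show "continuous_on {x..y} q"
    using assms arccos_crit_root_bounds by (intro continuous_at_imp_continuous_on ballI isCont_q) auto
qed

lemma q_less_at_arccos_crit_root:
  assumes "0 < a" "a < pi/2" "a \<noteq> arccos crit_root"
  shows "q a < q (arccos crit_root)"
  using assms arccos_crit_root_bounds q_less_before_crit[of a] q_greater_after_crit[of _ a]
  by (cases "a < arccos crit_root") auto

lemma alpha_star_eq_arccos: "alpha_star = arccos crit_root"
  unfolding alpha_star_def
proof (rule the_equality)
  show "0 < arccos crit_root \<and> arccos crit_root < pi/2 \<and>
      (\<forall>b. 0 < b \<and> b < pi/2 \<longrightarrow> q b \<le> q (arccos crit_root))"
    using arccos_crit_root_bounds q_less_at_arccos_crit_root by (metis order.order_iff_strict)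
next
  fix a assume "0 < a \<and> a < pi/2 \<and> (\<forall>b. 0 < b \<and> b < pi/2 \<longrightarrow> q b \<le> q a)"
  then show "a = arccos crit_root"
    using arccos_crit_root_bounds q_less_at_arccos_crit_root[of a] by force
qed

lemma alpha_star_bounds: "0 < alpha_star" "alpha_star < pi/2"
  using arccos_crit_root_bounds by (simp_all add: alpha_star_eq_arccos)

lemma sgn_crit_cubic_cos_alpha_star:
  "0 < a \<Longrightarrow> a < pi/2 \<Longrightarrow> sgn (crit_cubic (cos a)) = sgn (alpha_star - a)"
  using sgn_crit_cubic_cos by (simp add: alpha_star_eq_arccos)

lemma q_level_set_straddles_alpha_star:
  assumes "0 < a1" "a1 < a2" "a2 < pi/2" "q a1 = q a2"
  shows "a1 < alpha_star" "alpha_star < a2"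
  using assms q_less_before_crit[of a1 a2] q_greater_after_crit[of a1 a2]
  by (force simp: alpha_star_eq_arccos)+

definition sigma :: "real \<Rightarrow> real" where
  "sigma y = sqrt (1 + 81 * y^4)"

lemma sigma_pos: "0 < sigma y"
  by (simp add: sigma_def add_pos_nonneg)

lemma sigma_sq: "sigma y ^ 2 = 1 + 81 * y^4"
  by (simp add: sigma_def add_nonneg_nonneg)

lemma has_real_derivative_sigma: "(sigma has_real_derivative 162 * y^3 / sigma y) (at y)"
proof -
  have "((\<lambda>y. 1 + 81 * y^4) has_real_derivative 324 * y^3) (at y)"
    by (auto intro!: derivative_eq_intros)
  from DERIV_chain2[OF DERIV_real_sqrt this] show ?thesis
    by (simp add: sigma_def[abs_def] add_pos_nonneg field_simps)
qed

lemma sa_sb_on_axis: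
  assumes "0 < y"
  shows "sa 0 y = sigma y / (3 * y)" "sb 0 y = sigma y / (3 * y)"
proof -
  have "(1 / (3 * y))^2 + 9 * y^2 = (sigma y / (3 * y))^2"
    unfolding power_divide sigma_sq using assms by (simp add: field_simps eval_nat_numeral)
  then have "sqrt ((1 / (3 * y))^2 + 9 * y^2) = sigma y / (3 * y)"
    using assms sigma_pos[of y] by simp
  then show "sa 0 y = sigma y / (3 * y)" "sb 0 y = sigma y / (3 * y)"
    by (simp_all add: sa_def sb_def)
qed

lemma f_y_on_axis: "f_y 0 y = 0"
proof -
  have "(\<lambda>t. sf 0 t) = (\<lambda>t. 0)" by (simp add: sf_def sa_def sb_def)
  then show ?thesis by (simp add: f_y_def)
qed

lemma has_real_derivative_div_sqrt:
  fixes c :: real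
  assumes "0 < c"
  shows "((\<lambda>w. w / sqrt (w^2 + c)) has_real_derivative c / sqrt (w^2 + c) ^ 3) (at w)"
proof -
  define r where "r = sqrt (w^2 + c)"
  have pos: "0 < w^2 + c" using assms by (simp add: add_nonneg_pos)
  then have r: "0 < r" "r^2 = w^2 + c" by (simp_all add: r_def)
  have "((\<lambda>w. w^2 + c) has_real_derivative 2 * w) (at w)"
    by (auto intro!: derivative_eq_intros)
  from DERIV_chain2[OF DERIV_real_sqrt[OF pos] this]
  have "((\<lambda>w. sqrt (w^2 + c)) has_real_derivative w / r) (at w)"
    unfolding r_def by (simp add: field_simps)
  from DERIV_divide[OF DERIV_ident this] r(1)
  have "((\<lambda>w. w / sqrt (w^2 + c)) has_real_derivative (1 * r - w * (w / r)) / (r * r)) (at w)"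
    unfolding r_def by simp
  moreover have "(1 * r - w * (w / r)) / (r * r) = (r^2 - w^2) / r^3"
    using r(1) by (simp add: field_simps power2_eq_square power3_eq_cube)
  ultimately show ?thesis using r(2) unfolding r_def by simp
qed

lemma f_x_on_axis_neg:
  assumes "0 < y"
  shows "f_x 0 y < 0"
proof -
  define g where "g = (\<lambda>w. w / sqrt (w^2 + 9 * y^2))"
  define g' where "g' = 9 * y^2 / sqrt ((1 / (3 * y))^2 + 9 * y^2) ^ 3"
  have dg: "(g has_real_derivative g') (at (1 / (3 * y) + s * 0))" for s
    unfolding g_def g'_def using assms by (simp add: has_real_derivative_div_sqrt)
  have "((\<lambda>t. g (1 / (3 * y) + s * t)) has_real_derivative g' * s) (at 0)" for s
    by (rule DERIV_chain2[of g g' "\<lambda>t. 1 / (3 * y) + s * t", OF dg])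
      (auto intro!: derivative_eq_intros)
  from DERIV_diff[OF this[of "-3"] this[of 3]]
  have "((\<lambda>t. sf t y) has_real_derivative - 6 * g') (at 0)"
    by (simp add: sf_def sa_def sb_def g_def)
  then have "f_x 0 y = - 6 * g'"
    unfolding f_x_def by (rule DERIV_imp_deriv)
  moreover have "0 < (1 / (3 * y))^2 + 9 * y^2" using assms by (simp add: add_nonneg_pos)
  then have "0 < g'" using assms by (simp add: g'_def)
  ultimately show ?thesis by simp
qed

lemma deriv_even_zero:
  fixes g :: "real \<Rightarrow> real"
  assumes even: "\<And>x. g (- x) = g x" and "g differentiable (at 0)"
  shows "deriv g 0 = 0"
proof -
  obtain D where D: "(g has_real_derivative D) (at 0)"
    using assms(2) real_differentiable_def by blast
  have "(g has_real_derivative D) (at (- 0))" using D by simp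
  moreover have "((\<lambda>x. - x) has_real_derivative -1) (at (0::real))"
    by (auto intro!: derivative_eq_intros)
  ultimately have "((\<lambda>x. g (- x)) has_real_derivative D * -1) (at 0)"
    by (rule DERIV_chain2)
  moreover have "(\<lambda>x. g (- x)) = g" using even by (rule ext)
  ultimately have "(g has_real_derivative D * -1) (at 0)" by simp
  then have "D * -1 = D" using D by (rule DERIV_unique)
  with D show ?thesis by (simp add: DERIV_imp_deriv)
qed

lemma differentiable_sa_sb:
  assumes "0 < y"
  shows "(\<lambda>t. sa t y) differentiable (at x)" "(\<lambda>t. sb t y) differentiable (at x)"
proof -
  have "(\<lambda>t. sqrt ((1 / (3 * y) + s * t)^2 + 9 * y^2)) differentiable (at x)" for s
  proof -
    have pos: "0 < (1 / (3 * y) + s * x)^2 + 9 * y^2" using assms by (simp add: add_nonneg_pos)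
    have "((\<lambda>t. (1 / (3 * y) + s * t)^2 + 9 * y^2) has_real_derivative
        2 * (1 / (3 * y) + s * x) * s) (at x)"
      by (auto intro!: derivative_eq_intros)
    from DERIV_chain2[OF DERIV_real_sqrt[OF pos] this] show ?thesis
      unfolding real_differentiable_def by blast
  qed
  from this[of "-3"] this[of 3]
  show "(\<lambda>t. sa t y) differentiable (at x)" "(\<lambda>t. sb t y) differentiable (at x)"
    by (simp_all add: sa_def sb_def)
qed

lemma h_x_on_axis:
  assumes "0 < y"
  shows "h_x a0 0 y = 0"
proof -
  have "(\<lambda>t. sh a0 t y) differentiable (at 0)"
    using assms sa_sb_on_axis[OF assms] sigma_pos[of y] unfolding sh_def
    by (intro differentiable_add differentiable_mult differentiable_divide differentiable_const
        differentiable_sa_sb) auto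
  moreover have "sh a0 (- x) y = sh a0 x y" for x
    by (simp add: sh_def sa_def sb_def algebra_simps)
  ultimately show ?thesis unfolding h_x_def by (intro deriv_even_zero)
qed

lemma sh_on_axis:
  assumes "0 < y"
  shows "sh a0 0 y = - 18 * y^2 / sigma y + q a0 * sigma y * (sigma y + 4) / (27 * y^3)"
  using assms sigma_pos[of y]
  by (simp add: sh_def sa_sb_on_axis field_simps power2_eq_square power3_eq_cube)

lemma h_y_on_axis:
  assumes "0 < y"
  shows "h_y a0 0 y = - 36 * y / sigma y + 2916 * y^5 / sigma y ^ 3
    + q a0 * (12 + 24 / sigma y - sigma y * (sigma y + 4) / (9 * y^4))"
proof -
  define S S' where "S = sigma y" and "S' = 162 * y^3 / S"
  have S: "0 < S" using sigma_pos by (simp add: S_def)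
  have dS: "(sigma has_real_derivative S') (at y)"
    unfolding S'_def S_def by (rule has_real_derivative_sigma)
  have "((\<lambda>t. - 18 * t^2) has_real_derivative - 36 * y) (at y)"
    by (auto intro!: derivative_eq_intros)
  from DERIV_divide[OF this dS] S
  have d1: "((\<lambda>t. - 18 * t^2 / sigma t) has_real_derivative
      (- 36 * y * S - (- 18 * y^2) * S') / (S * S)) (at y)"
    by (simp add: S_def)
  have "((\<lambda>t. q a0 * sigma t * (sigma t + 4)) has_real_derivative q a0 * (S' * (S + 4) + S' * S)) (at y)"
    using DERIV_cmult[OF DERIV_mult[OF dS DERIV_add[OF dS DERIV_const]], of "q a0" 4]
    by (simp add: S_def mult.assoc)
  moreover have "((\<lambda>t. 27 * t^3) has_real_derivative 81 * y^2) (at y)"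
    by (auto intro!: derivative_eq_intros)
  ultimately have d2: "((\<lambda>t. q a0 * sigma t * (sigma t + 4) / (27 * t^3)) has_real_derivative
      (q a0 * (S' * (S + 4) + S' * S) * (27 * y^3) - q a0 * S * (S + 4) * (81 * y^2))
        / ((27 * y^3) * (27 * y^3))) (at y)"
    using DERIV_divide assms by (fastforce simp: S_def)
  have "(- 36 * y * S - (- 18 * y^2) * S') / (S * S)
      + (q a0 * (S' * (S + 4) + S' * S) * (27 * y^3) - q a0 * S * (S + 4) * (81 * y^2))
        / ((27 * y^3) * (27 * y^3))
    = - 36 * y / S + 2916 * y^5 / S ^ 3 + q a0 * (12 + 24 / S - S * (S + 4) / (9 * y^4))"
    using S assms by (simp add: S'_def field_simps power2_eq_square power3_eq_cube eval_nat_numeral)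
  with DERIV_add[OF d1 d2]
  have "((\<lambda>t. - 18 * t^2 / sigma t + q a0 * sigma t * (sigma t + 4) / (27 * t^3)) has_real_derivative
      - 36 * y / sigma y + 2916 * y^5 / sigma y ^ 3
      + q a0 * (12 + 24 / sigma y - sigma y * (sigma y + 4) / (9 * y^4))) (at y)"
    by (simp add: S_def)
  then have "((\<lambda>t. sh a0 0 t) has_real_derivative - 36 * y / sigma y + 2916 * y^5 / sigma y ^ 3
      + q a0 * (12 + 24 / sigma y - sigma y * (sigma y + 4) / (9 * y^4))) (at y)"
    by (rule has_field_derivative_transform_within_open[where S = "{0<..}"])
      (use assms sh_on_axis in auto)
  then show ?thesis unfolding h_y_def by (rule DERIV_imp_deriv)
qed

lemma equilibrium_identities:
  assumes "0 < a" "a < pi/2"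
  defines "y \<equiv> sqrt (tan a) / 3"
  shows "81 * y^4 = (1 - (cos a)^2) / (cos a)^2"
    and "sigma y = 1 / cos a"
    and "q a = 6 * y * cos a * (1 - (cos a)^2) / (4 * cos a + 1)"
proof -
  have c: "0 < cos a" using assms by (simp add: cos_gt_zero)
  have "sqrt (tan a) ^ 4 = (sqrt (tan a) ^ 2) ^ 2"
    by (simp only: power_mult[symmetric]) simp
  also have "\<dots> = (tan a)^2" using assms tan_gt_zero[of a] by simp
  finally have "81 * y^4 = (tan a)^2" by (simp add: y_def power_divide)
  then show y4: "81 * y^4 = (1 - (cos a)^2) / (cos a)^2"
    by (simp add: tan_def power_divide sin_squared_eq)
  have "1 + (tan a)^2 = inverse (cos a) ^ 2" using c by (intro tan_sec) simp
  with \<open>81 * y^4 = (tan a)^2\<close> show "sigma y = 1 / cos a"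
    using c by (simp add: sigma_def inverse_eq_divide)
  have "q a = 2 * (1 - (cos a)^2) * (3 * y) / (4 + 1 / cos a)"
    by (simp add: q_def y_def sin_squared_eq)
  also have "\<dots> = 6 * y * cos a * (1 - (cos a)^2) / (4 * cos a + 1)"
    using c by (simp add: field_simps)
  finally show "q a = 6 * y * cos a * (1 - (cos a)^2) / (4 * cos a + 1)" .
qed

lemma h_y_at_equilibrium:
  assumes "0 < a" "a < pi/2" "q a = q a0"
  defines "y \<equiv> sqrt (tan a) / 3"
  shows "h_y a0 0 y = - (18 * y * cos a / (4 * cos a + 1)) * crit_cubic (cos a)"
proof -
  \<comment> \<open>\<open>K\<close> is kept opaque so that \<open>simp\<close> cancels it instead of expanding denominators.\<close>
  define c K where "c = cos a" and "K = 1 - c^2"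
  note E = equilibrium_identities[OF assms(1,2), folded y_def c_def, folded K_def]
  have c: "0 < c" "c < 1" using assms cos_gt_zero[of a] cos_monotone_0_pi[of 0 a]
    by (auto simp: c_def)
  then have "c * c < 1 * 1" by (intro mult_strict_mono) auto
  then have K: "K \<noteq> 0" by (simp add: K_def power2_eq_square)
  have y: "0 < y" using assms tan_gt_zero[of a] by (simp add: y_def)
  have q0: "q a0 = 6 * y * c * K / (4 * c + 1)" using E(3) assms(3) by simp
  have y5: "2916 * y^5 = 36 * y * (K / c^2)"
    unfolding E(1)[symmetric] by (simp add: eval_nat_numeral)
  have y4: "9 * y^4 = K / (9 * c^2)" using E(1) by (simp add: field_simps)
  have sig4: "sigma y * (sigma y + 4) / (9 * y^4) = 9 * (1 + 4 * c) / K"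
    using c K unfolding E(2) y4 by (simp add: field_simps power2_eq_square)
  have "q a0 * (sigma y * (sigma y + 4) / (9 * y^4)) = 54 * y * c"
    unfolding sig4 q0 using c K by simp (simp add: field_simps)
  then have qS: "q a0 * (12 + 24 / sigma y - sigma y * (sigma y + 4) / (9 * y^4))
      = 6 * y * c * K * (12 + 24 * c) / (4 * c + 1) - 54 * y * c"
    unfolding right_diff_distrib by (simp add: q0 E(2) algebra_simps)
  have "h_y a0 0 y = - 36 * y * c + 36 * y * c * K
      + 6 * y * c * K * (12 + 24 * c) / (4 * c + 1) - 54 * y * c"
    unfolding h_y_on_axis[OF y] qS unfolding y5 E(2) using c
    by (simp add: field_simps power2_eq_square power3_eq_cube)
  also have "\<dots> = - (18 * y * c / (4 * c + 1)) * crit_cubic c"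
    using c by (simp add: K_def crit_cubic_def field_simps power2_eq_square power3_eq_cube)
  finally show ?thesis by (simp add: c_def)
qed

definition decoupled_jac :: "real \<Rightarrow> real \<Rightarrow> complex mat" where
  "decoupled_jac F H = mat 4 4 (\<lambda>(i, j). complex_of_real
     (if i = 0 then (if j = 1 then 1 else 0)
      else if i = 1 then (if j = 0 then F else 0)
      else if i = 2 then (if j = 3 then 1 else 0)
      else (if j = 2 then H else 0)))"

lemma steiner_jac_on_axis:
  assumes "0 < y"
  shows "steiner_jac a0 0 y = decoupled_jac (f_x 0 y) (h_y a0 0 y)"
  unfolding steiner_jac_def decoupled_jac_def f_y_on_axis h_x_on_axis[OF assms]
  by (rule cong_mat) auto

lemma decoupled_jac_mult_eq_smult_iff:
  assumes "v \<in> carrier_vec 4"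
  shows "decoupled_jac F H *\<^sub>v v = k \<cdot>\<^sub>v v \<longleftrightarrow>
    v $ 1 = k * v $ 0 \<and> F * v $ 0 = k * v $ 1 \<and> v $ 3 = k * v $ 2 \<and> H * v $ 2 = k * v $ 3"
proof -
  have "(\<Sum>j<4. f j) = f 0 + f 1 + f 2 + f 3" for f :: "nat \<Rightarrow> complex"
    by (simp add: eval_nat_numeral)
  moreover have "(\<forall>i<4. P i) \<longleftrightarrow> P 0 \<and> P 1 \<and> P 2 \<and> P 3" for P :: "nat \<Rightarrow> bool"
    by (auto simp: less_Suc_eq eval_nat_numeral)
  ultimately show ?thesis
    using assms by (auto simp: vec_eq_iff decoupled_jac_def scalar_prod_def atLeast0LessThan)
qed

lemma eigenvalue_decoupled_jac_iff:
  "eigenvalue (decoupled_jac F H) k \<longleftrightarrow> k^2 = of_real F \<or> k^2 = of_real H"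
proof
  assume "eigenvalue (decoupled_jac F H) k"
  then obtain v where v: "v \<in> carrier_vec 4" "v \<noteq> 0\<^sub>v 4" "decoupled_jac F H *\<^sub>v v = k \<cdot>\<^sub>v v"
    by (auto simp: eigenvalue_def eigenvector_def decoupled_jac_def)
  then have eqs: "v $ 1 = k * v $ 0" "F * v $ 0 = k * v $ 1" "v $ 3 = k * v $ 2" "H * v $ 2 = k * v $ 3"
    using decoupled_jac_mult_eq_smult_iff by blast+
  show "k^2 = of_real F \<or> k^2 = of_real H"
  proof (cases "v $ 0 = 0 \<and> v $ 2 = 0")
    case True
    then have "v = 0\<^sub>v 4"
      using v(1) eqs by (intro eq_vecI) (auto simp: less_Suc_eq eval_nat_numeral)
    with v(2) show ?thesis by contradiction
  next
    case False
    then show ?thesis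
      using eqs by (auto simp: power2_eq_square mult.assoc)
  qed
next
  have dim: "dim_row (decoupled_jac F H) = 4" by (simp add: decoupled_jac_def)
  assume "k^2 = of_real F \<or> k^2 = of_real H"
  then obtain v :: "complex vec" where "v \<in> carrier_vec 4" "v \<noteq> 0\<^sub>v 4"
      "v $ 1 = k * v $ 0" "F * v $ 0 = k * v $ 1" "v $ 3 = k * v $ 2" "H * v $ 2 = k * v $ 3"
  proof (elim disjE)
    assume "k^2 = of_real F"
    then show ?thesis
      by (intro that[of "vec 4 (\<lambda>i. if i = 0 then 1 else if i = 1 then k else 0)"])
        (auto simp: power2_eq_square vec_eq_iff)
  next
    assume "k^2 = of_real H"
    then show ?thesis
      by (intro that[of "vec 4 (\<lambda>i. if i = 2 then 1 else if i = 3 then k else 0)"])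
        (auto simp: power2_eq_square vec_eq_iff intro!: exI[of _ 2])
  qed
  then show "eigenvalue (decoupled_jac F H) k"
    unfolding eigenvalue_def eigenvector_def dim using decoupled_jac_mult_eq_smult_iff by blast
qed

lemma power2_eq_of_real_neg_iff:
  fixes k :: complex
  assumes "x < 0"
  shows "k^2 = of_real x \<longleftrightarrow> k = \<i> * of_real (sqrt (- x)) \<or> k = - \<i> * of_real (sqrt (- x))"
proof -
  have "of_real x = (\<i> * of_real (sqrt (- x)))^2"
    using assms by (simp add: power_mult_distrib flip: of_real_power)
  then show ?thesis by (simp add: power2_eq_iff)
qed

lemma power2_eq_of_real_pos_iff:
  fixes k :: complex
  assumes "0 < x"
  shows "k^2 = of_real x \<longleftrightarrow> k = of_real (sqrt x) \<or> k = - of_real (sqrt x)"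
proof -
  have "of_real x = (of_real (sqrt x) :: complex)^2"
    using assms by (simp flip: of_real_power)
  then show ?thesis by (simp add: power2_eq_iff)
qed

lemma spectrum_decoupled_jac_center_center:
  assumes "F < 0" "H < 0"
  shows "{k. eigenvalue (decoupled_jac F H) k} =
    {\<i> * of_real (sqrt (- F)), - \<i> * of_real (sqrt (- F)), \<i> * of_real (sqrt (- H)), - \<i> * of_real (sqrt (- H))}"
  using assms by (auto simp: eigenvalue_decoupled_jac_iff power2_eq_of_real_neg_iff)

lemma spectrum_decoupled_jac_center_saddle:
  assumes "F < 0" "0 < H"
  shows "{k. eigenvalue (decoupled_jac F H) k} =
    {\<i> * of_real (sqrt (- F)), - \<i> * of_real (sqrt (- F)), of_real (sqrt H), - of_real (sqrt H)}"
  using assms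
  by (auto simp: eigenvalue_decoupled_jac_iff power2_eq_of_real_neg_iff power2_eq_of_real_pos_iff)

lemma equilibrium_linearization:
  assumes "0 < a" "a < pi/2" "q a = q a0"
  defines "y \<equiv> sqrt (tan a) / 3"
  shows "f_x 0 y < 0"
    and "steiner_jac a0 0 y = decoupled_jac (f_x 0 y) (h_y a0 0 y)"
    and "sgn (h_y a0 0 y) = sgn (a - alpha_star)"
proof -
  have y: "0 < y" using assms tan_gt_zero[of a] by (simp add: y_def)
  show "f_x 0 y < 0" by (rule f_x_on_axis_neg[OF y])
  show "steiner_jac a0 0 y = decoupled_jac (f_x 0 y) (h_y a0 0 y)"
    by (rule steiner_jac_on_axis[OF y])
  have "0 < 18 * y * cos a / (4 * cos a + 1)" using assms y cos_gt_zero[of a] by simp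
  then have "sgn (h_y a0 0 y) = - sgn (crit_cubic (cos a))"
    unfolding h_y_at_equilibrium[OF assms(1-3), folded y_def]
    by (simp only: sgn_mult sgn_minus sgn_pos)
  also have "\<dots> = sgn (a - alpha_star)"
    using sgn_crit_cubic_cos_alpha_star[OF assms(1,2)] by (simp add: sgn_minus[symmetric])
  finally show "sgn (h_y a0 0 y) = sgn (a - alpha_star)" .
qed

lemma spectrum_equilibrium_before_alpha_star:
  assumes "0 < a" "a < alpha_star" "q a = q a0"
  shows "\<exists>s1 s2. s1 > 0 \<and> s2 > 0 \<and>
    {k. eigenvalue (steiner_jac a0 0 (sqrt (tan a) / 3)) k}
      = {\<i> * of_real s1, - \<i> * of_real s1, \<i> * of_real s2, - \<i> * of_real s2}"
proof -
  have a: "a < pi/2" using assms alpha_star_bounds by simp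
  define y where "y = sqrt (tan a) / 3"
  note L = equilibrium_linearization[OF assms(1) a assms(3), folded y_def]
  have H: "h_y a0 0 y < 0" using L(3) assms(2) by (simp add: sgn_if split: if_splits)
  show ?thesis
    unfolding y_def[symmetric] L(2) spectrum_decoupled_jac_center_center[OF L(1) H]
    by (rule exI[of _ "sqrt (- f_x 0 y)"], rule exI[of _ "sqrt (- h_y a0 0 y)"]) (simp add: L(1) H)
qed

lemma spectrum_equilibrium_after_alpha_star:
  assumes "alpha_star < a" "a < pi/2" "q a = q a0"
  shows "\<exists>s r. s > 0 \<and> r > 0 \<and>
    {k. eigenvalue (steiner_jac a0 0 (sqrt (tan a) / 3)) k}
      = {\<i> * of_real s, - \<i> * of_real s, of_real r, - of_real r}"
proof -
  have a: "0 < a" using assms alpha_star_bounds by simp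
  define y where "y = sqrt (tan a) / 3"
  note L = equilibrium_linearization[OF a assms(2,3), folded y_def]
  have H: "0 < h_y a0 0 y" using L(3) assms(1) by (simp add: sgn_if split: if_splits)
  show ?thesis
    unfolding y_def[symmetric] L(2) spectrum_decoupled_jac_center_saddle[OF L(1) H]
    by (rule exI[of _ "sqrt (- f_x 0 y)"], rule exI[of _ "sqrt (h_y a0 0 y)"]) (simp add: L(1) H)
qed

theorem mainTheorem4:
  fixes \<alpha>0 :: real
  assumes "0 < \<alpha>0" and "\<alpha>0 < pi/2"
  shows
   "(\<forall>\<alpha>e ye. 0 < \<alpha>e \<and> \<alpha>e < pi/2 \<and> q \<alpha>e = q \<alpha>0 \<and> ye = sqrt (tan \<alpha>e) / 3 \<longrightarrow>
        f_x 0 ye < 0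
      \<and> eigenvalue (steiner_jac \<alpha>0 0 ye) (\<i> * complex_of_real (sqrt (- f_x 0 ye)))
      \<and> eigenvalue (steiner_jac \<alpha>0 0 ye) (- \<i> * complex_of_real (sqrt (- f_x 0 ye)))
      \<and> sqrt (- f_x 0 ye) \<noteq> 0
      \<and> (\<alpha>e < alpha_star \<longrightarrow> h_y \<alpha>0 0 ye < 0)
      \<and> (\<alpha>e = alpha_star \<longrightarrow> h_y \<alpha>0 0 ye = 0)
      \<and> (\<alpha>e > alpha_star \<longrightarrow> h_y \<alpha>0 0 ye > 0))
  \<and> (\<alpha>0 < alpha_star \<longrightarrow>
      (\<exists>s1 s2. s1 > 0 \<and> s2 > 0 \<and>
         {k. eigenvalue (steiner_jac \<alpha>0 0 (sqrt (tan \<alpha>0) / 3)) k}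
           = {\<i> * of_real s1, - \<i> * of_real s1, \<i> * of_real s2, - \<i> * of_real s2}))
  \<and> (\<alpha>0 > alpha_star \<longrightarrow>
      (\<exists>s r. s > 0 \<and> r > 0 \<and>
         {k. eigenvalue (steiner_jac \<alpha>0 0 (sqrt (tan \<alpha>0) / 3)) k}
           = {\<i> * of_real s, - \<i> * of_real s, of_real r, - of_real r}))
  \<and> (\<alpha>0 \<noteq> alpha_star \<longrightarrow>
      (\<forall>\<alpha>1 \<alpha>2. 0 < \<alpha>1 \<and> \<alpha>1 < \<alpha>2 \<and> \<alpha>2 < pi/2 \<and> q \<alpha>1 = q \<alpha>0 \<and> q \<alpha>2 = q \<alpha>0 \<longrightarrow>
         (\<exists>s1 s2. s1 > 0 \<and> s2 > 0 \<and>
            {k. eigenvalue (steiner_jac \<alpha>0 0 (sqrt (tan \<alpha>1) / 3)) k}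
              = {\<i> * of_real s1, - \<i> * of_real s1, \<i> * of_real s2, - \<i> * of_real s2})
       \<and> (\<exists>s r. s > 0 \<and> r > 0 \<and>
            {k. eigenvalue (steiner_jac \<alpha>0 0 (sqrt (tan \<alpha>2) / 3)) k}
              = {\<i> * of_real s, - \<i> * of_real s, of_real r, - of_real r})))"
proof (intro conjI allI impI)
  fix \<alpha>e ye assume "0 < \<alpha>e \<and> \<alpha>e < pi/2 \<and> q \<alpha>e = q \<alpha>0 \<and> ye = sqrt (tan \<alpha>e) / 3"
  then have "0 < \<alpha>e" "\<alpha>e < pi/2" "q \<alpha>e = q \<alpha>0" and ye: "ye = sqrt (tan \<alpha>e) / 3" by auto
  note L = equilibrium_linearization[OF this(1-3), folded ye]
  show "f_x 0 ye < 0" by (fact L(1))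
  then show "sqrt (- f_x 0 ye) \<noteq> 0"
    and "eigenvalue (steiner_jac \<alpha>0 0 ye) (\<i> * complex_of_real (sqrt (- f_x 0 ye)))"
    and "eigenvalue (steiner_jac \<alpha>0 0 ye) (- \<i> * complex_of_real (sqrt (- f_x 0 ye)))"
    by (simp_all add: L(2) eigenvalue_decoupled_jac_iff power2_eq_of_real_neg_iff)
  show "\<alpha>e < alpha_star \<Longrightarrow> h_y \<alpha>0 0 ye < 0" "\<alpha>e = alpha_star \<Longrightarrow> h_y \<alpha>0 0 ye = 0"
    "\<alpha>e > alpha_star \<Longrightarrow> h_y \<alpha>0 0 ye > 0"
    using L(3) by (auto simp: sgn_if split: if_splits)
next
  fix \<alpha>1 \<alpha>2 assume "0 < \<alpha>1 \<and> \<alpha>1 < \<alpha>2 \<and> \<alpha>2 < pi/2 \<and> q \<alpha>1 = q \<alpha>0 \<and> q \<alpha>2 = q \<alpha>0"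
  moreover from this have "\<alpha>1 < alpha_star" "alpha_star < \<alpha>2"
    using q_level_set_straddles_alpha_star[of \<alpha>1 \<alpha>2] by auto
  ultimately show
    "\<exists>s1 s2. s1 > 0 \<and> s2 > 0 \<and> {k. eigenvalue (steiner_jac \<alpha>0 0 (sqrt (tan \<alpha>1) / 3)) k}
       = {\<i> * of_real s1, - \<i> * of_real s1, \<i> * of_real s2, - \<i> * of_real s2}"
    "\<exists>s r. s > 0 \<and> r > 0 \<and> {k. eigenvalue (steiner_jac \<alpha>0 0 (sqrt (tan \<alpha>2) / 3)) k}
       = {\<i> * of_real s, - \<i> * of_real s, of_real r, - of_real r}"
    using spectrum_equilibrium_before_alpha_star spectrum_equilibrium_after_alpha_star by auto
qed (use assms spectrum_equilibrium_before_alpha_star spectrum_equilibrium_after_alpha_star in auto)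

end
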